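(* Let $\varepsilon\in\{-1,1\}$, $\nu>0$ and let $l$ be a non-negative integer. Then there is $C>0$ such that $$\|\partial_x^l\big(S(\cdot,\cdot,t)-K(\cdot,\cdot,t)\big)\|_{L^\infty(\mathbb{R}^2)}\le C t^{-\frac74-\frac l2},\qquad t>0 .$$
   Context: Fourier transform on $\mathbb{R}^2$: $\hat f(\xi,\eta)=\frac{1}{2\pi}\int_{\mathbb{R}^2}e^{-ix\xi-iy\eta}f\,dx\,dy$, inverse $\mathcal{F}^{-1}[g](x,y)=\frac{1}{2\pi}\int_{\mathbb{R}^2}e^{ix\xi+iy\eta}g(\xi,\eta)\,d\xi\,d\eta$. $S(x,y,t):=\mathcal{F}^{-1}\big[\frac{1}{2\pi}e^{-\nu t\xi^2+it(\xi^3-\varepsilon\eta^2/\xi)}\big](x,y)$ (the kernel of the linear problem $\tilde u_t+\tilde u_{xxx}+\varepsilon\partial_x^{-1}\tilde u_{yy}-\nu\tilde u_{xx}=0$). $K(x,y,t):=t^{-5/4}K_*(xt^{-1/2},yt^{-3/4})$ for $t>0$, with $$K_*(x,y):=\frac{1}{4\pi^{3/2}\nu^{3/4}}\int_0^\infty r^{-1/4}e^{-r}\cos\Big(x\sqrt{\tfrac{r}{\nu}}+\frac{y^2}{4\varepsilon}\sqrt{\tfrac{r}{\nu}}-\frac{\pi}{4}\varepsilon\Big)\,dr .$$ *)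

theory Defs
  imports "HOL-Analysis.Analysis"
begin

text \<open>Kernel S of the linear problem, as the inverse Fourier transform
  F^{-1}[(1/2pi) exp(-nu t xi^2 + i t (xi^3 - eps eta^2/xi))](x,y).
  The symbol is not absolutely integrable in eta, so the transform is taken
  as the iterated integral: inner eta-integral as improper (Henstock-Kurzweil
  over the whole line) integral, then the xi-integral.
  The overall constant is (1/(2 pi)) * (1/(2 pi)).\<close>
definition S_kernel :: "real \<Rightarrow> real \<Rightarrow> real \<Rightarrow> real \<Rightarrow> real \<Rightarrow> complex" where
  "S_kernel \<epsilon> \<nu> x y t =
     (1 / (4 * of_real (pi\<^sup>2))) *
     integral UNIV (\<lambda>\<xi>::real. integral UNIV (\<lambda>\<eta>::real.
        exp (\<i> * of_real (x * \<xi> + y * \<eta>)) *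
        exp (of_real (- \<nu> * t * \<xi>\<^sup>2) + \<i> * of_real (t * (\<xi> ^ 3 - \<epsilon> * \<eta>\<^sup>2 / \<xi>)))))"

definition K_star :: "real \<Rightarrow> real \<Rightarrow> real \<Rightarrow> real \<Rightarrow> real" where
  "K_star \<epsilon> \<nu> x y =
     1 / (4 * pi powr (3/2) * \<nu> powr (3/4)) *
     integral {0<..} (\<lambda>r::real. r powr (-1/4) * exp (- r) *
        cos (x * sqrt (r / \<nu>) + y\<^sup>2 / (4 * \<epsilon>) * sqrt (r / \<nu>) - pi / 4 * \<epsilon>))"

definition K_kernel :: "real \<Rightarrow> real \<Rightarrow> real \<Rightarrow> real \<Rightarrow> real \<Rightarrow> real" where
  "K_kernel \<epsilon> \<nu> x y t = t powr (-5/4) * K_star \<epsilon> \<nu> (x * t powr (-1/2)) (y * t powr (-3/4))"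

definition xderiv :: "nat \<Rightarrow> (real \<Rightarrow> complex) \<Rightarrow> real \<Rightarrow> complex" where
  "xderiv l f = ((\<lambda>g. \<lambda>x. vector_derivative g (at x)) ^^ l) f"

end

theory Submission
  imports Defs "HOL-Probability.Characteristic_Functions" "HOL-Complex_Analysis.Cauchy_Integral_Theorem"
begin

text \<open>The \<eta>-integral in the definition of S is a Fresnel integral,
  \<integral> exp (i (y \<eta> - c \<eta>^2)) d\<eta> = sqrt (pi / |c|) exp (- i pi sgn c / 4) exp (i y^2 / (4 c)) with c = t \<epsilon> / \<xi>,
  which turns S into a Fourier integral \<integral> exp (i x \<xi>) k(\<xi>) exp (i t \<xi>^3) d\<xi> in x with
  |k(\<xi>)| = sqrt (pi / t) sqrt |\<xi>| exp (- \<nu> t \<xi>^2) / (4 pi^2). The substitution r = \<nu> t \<xi>^2 in K_*,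
  together with the symmetry exp (- i x \<xi>) k(- \<xi>) = conj (exp (i x \<xi>) k(\<xi>)), shows that K is the same
  Fourier integral without the Airy factor exp (i t \<xi>^3). Differentiating under the integral sign,
  (d/dx)^l (S - K) = \<integral> exp (i x \<xi>) (i \<xi>)^l k(\<xi>) (exp (i t \<xi>^3) - 1) d\<xi>, and
  |exp (i t \<xi>^3) - 1| \<le> t |\<xi>|^3 bounds this by t^(1/2) times the Gaussian moment
  \<integral> |\<xi>|^(l+3) sqrt |\<xi>| exp (- \<nu> t \<xi>^2) d\<xi>, which scales like (\<nu> t)^(- (2 l + 9) / 4).
  The Fresnel integral itself comes from rotating the Gaussian integral by Cauchy's theorem
  on a triangle.\<close>

section \<open>Integrals over the real line\<close>

lemma has_integral_UNIV_real_iff: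
  fixes f :: "real \<Rightarrow> 'a::banach"
  shows "(f has_integral I) UNIV \<longleftrightarrow>
    (\<forall>e>0. \<exists>B. \<forall>a b. a \<le> -B \<longrightarrow> B \<le> b \<longrightarrow> (\<exists>z. (f has_integral z) {a..b} \<and> norm (z - I) < e))"
proof -
  have not_box: "\<not> (\<exists>a b. (UNIV::real set) = cbox a b)"
    by (metis bounded_cbox not_bounded_UNIV)
  have ball_sub: "ball 0 B \<subseteq> cbox a b \<longleftrightarrow> a \<le> -B \<and> B \<le> b" if "B > 0" for a b B :: real
    using that unfolding ball_eq_greaterThanLessThan cbox_interval greaterThanLessThan_subseteq_atLeastAtMost_iff
    by simp
  show ?thesis
  proof (subst has_integral_alt, simp only: not_box if_False, intro iffI allI impI)
    fix e :: real
    assume "\<forall>e>0. \<exists>B>0. \<forall>a b. ball 0 B \<subseteq> cbox a b \<longrightarrow>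
        (\<exists>z. ((\<lambda>x. if x \<in> UNIV then f x else 0) has_integral z) (cbox a b) \<and> norm (z - I) < e)" "e > 0"
    then obtain B where "B > 0" and "\<forall>a b. ball 0 B \<subseteq> cbox a b \<longrightarrow>
        (\<exists>z. (f has_integral z) (cbox a b) \<and> norm (z - I) < e)"
      by auto
    then show "\<exists>B. \<forall>a b. a \<le> -B \<longrightarrow> B \<le> b \<longrightarrow> (\<exists>z. (f has_integral z) {a..b} \<and> norm (z - I) < e)"
      using ball_sub by (metis cbox_interval)
  next
    fix e :: real
    assume "\<forall>e>0. \<exists>B. \<forall>a b. a \<le> -B \<longrightarrow> B \<le> b \<longrightarrow>
        (\<exists>z. (f has_integral z) {a..b} \<and> norm (z - I) < e)" "e > 0"
    then obtain B where "\<forall>a b. a \<le> -B \<longrightarrow> B \<le> b \<longrightarrow> (\<exists>z. (f has_integral z) {a..b} \<and> norm (z - I) < e)"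
      by auto
    then show "\<exists>B>0. \<forall>a b. ball 0 B \<subseteq> cbox a b \<longrightarrow>
        (\<exists>z. ((\<lambda>x. if x \<in> UNIV then f x else 0) has_integral z) (cbox a b) \<and> norm (z - I) < e)"
      using ball_sub[of "max B 1"] by (intro exI[of _ "max B 1"]) (auto simp: cbox_interval)
  qed
qed

lemma has_integral_UNIV_real_affinity:
  fixes f :: "real \<Rightarrow> 'a::banach"
  assumes "(f has_integral I) UNIV" and "m > 0"
  shows "((\<lambda>x. f (m * x + c)) has_integral I /\<^sub>R m) UNIV"
  unfolding has_integral_UNIV_real_iff
proof (intro allI impI)
  fix e :: real
  assume "e > 0"
  then obtain B where B: "\<And>a b. a \<le> -B \<Longrightarrow> B \<le> b \<Longrightarrow> \<exists>z. (f has_integral z) {a..b} \<and> norm (z - I) < m * e"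
    using assms unfolding has_integral_UNIV_real_iff by (metis mult_pos_pos)
  show "\<exists>B. \<forall>a b. a \<le> -B \<longrightarrow> B \<le> b \<longrightarrow>
      (\<exists>z. ((\<lambda>x. f (m * x + c)) has_integral z) {a..b} \<and> norm (z - I /\<^sub>R m) < e)"
  proof (intro exI[of _ "(B + \<bar>c\<bar>) / m"] allI impI)
    fix a b
    assume "a \<le> - ((B + \<bar>c\<bar>) / m)" "(B + \<bar>c\<bar>) / m \<le> b"
    with \<open>m > 0\<close> have "m * a + c \<le> -B" "B \<le> m * b + c"
      by (simp_all add: field_simps)
    then obtain z where z: "(f has_integral z) {m * a + c..m * b + c}" "norm (z - I) < m * e"
      using B by blast
    have "((\<lambda>x. f (m * x + c)) has_integral z /\<^sub>R m) {a..b}"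
      using has_integral_affinity'[of f z "m * a + c" "m * b + c" m c] z(1) \<open>m > 0\<close> by (simp add: field_simps)
    moreover have "norm (z /\<^sub>R m - I /\<^sub>R m) = norm (z - I) / m"
      using \<open>m > 0\<close> by (simp add: divide_inverse_commute flip: scaleR_diff_right)
    ultimately show "\<exists>z. ((\<lambda>x. f (m * x + c)) has_integral z) {a..b} \<and> norm (z - I /\<^sub>R m) < e"
      using z(2) \<open>m > 0\<close> by (metis mult.commute pos_divide_less_eq)
  qed
qed

lemma has_integral_UNIV_even_real:
  fixes f :: "real \<Rightarrow> 'a::banach"
  assumes "continuous_on UNIV f" and "\<And>x. f (- x) = f x"
    and "((\<lambda>R. integral {0..R} f) \<longlongrightarrow> L) at_top"
  shows "(f has_integral 2 *\<^sub>R L) UNIV"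
  unfolding has_integral_UNIV_real_iff
proof (intro allI impI)
  define P where "P R = integral {0..R} f" for R
  have P: "(f has_integral P R) {0..R}" for R
    unfolding P_def using assms(1)
    by (intro integrable_integral integrable_continuous_interval) (rule continuous_on_subset, auto)
  fix e :: real
  assume "e > 0"
  with assms(3) have "\<forall>\<^sub>F R in at_top. dist (P R) L < e / 2"
    unfolding P_def by (intro tendstoD) auto
  then obtain N where N: "\<And>R. R \<ge> N \<Longrightarrow> norm (P R - L) < e / 2"
    by (auto simp: eventually_at_top_linorder dist_norm)
  show "\<exists>B. \<forall>a b. a \<le> - B \<longrightarrow> B \<le> b \<longrightarrow> (\<exists>z. (f has_integral z) {a..b} \<and> norm (z - 2 *\<^sub>R L) < e)"
  proof (intro exI[of _ "\<bar>N\<bar>"] allI impI exI conjI)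
    fix a b :: real
    assume "a \<le> - \<bar>N\<bar>" "\<bar>N\<bar> \<le> b"
    have "((\<lambda>x. f (- x)) has_integral P (- a)) {- (- a)..- 0}"
      using P by (subst has_integral_reflect_real)
    then have "(f has_integral P (- a)) {a..0}"
      by (simp add: assms(2))
    with P[of b] show "(f has_integral P (- a) + P b) {a..b}"
      using \<open>a \<le> - \<bar>N\<bar>\<close> \<open>\<bar>N\<bar> \<le> b\<close> by (intro has_integral_combine) auto
    have "norm (P (- a) + P b - 2 *\<^sub>R L) \<le> norm (P (- a) - L) + norm (P b - L)"
      using norm_triangle_ineq[of "P (- a) - L" "P b - L"] by (simp add: algebra_simps scaleR_2)
    also have "\<dots> < e"
      using N[of "- a"] N[of b] \<open>a \<le> - \<bar>N\<bar>\<close> \<open>\<bar>N\<bar> \<le> b\<close> by linarith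
    finally show "norm (P (- a) + P b - 2 *\<^sub>R L) < e" .
  qed
qed

lemma lborel_integral_even:
  fixes q :: "real \<Rightarrow> real"
  assumes "integrable lborel q" and "\<And>x. q (- x) = q x"
  shows "(\<integral>x. q x \<partial>lborel) = 2 * integral {0<..} q"
proof -
  have pos: "integrable lborel (\<lambda>x. indicator {0<..} x *\<^sub>R q x)"
    and neg: "integrable lborel (\<lambda>x. indicator {..<0} x *\<^sub>R q x)"
    by (intro integrable_mult_indicator assms(1); simp)+
  have meas: "q \<in> borel_measurable lborel"
    by (rule borel_measurable_integrable[OF assms(1)])
  have split: "AE x in lborel. q x = indicator {0<..} x *\<^sub>R q x + indicator {..<0} x *\<^sub>R q x"
    using AE_lborel_singleton[of 0] by eventually_elim (auto simp: indicator_def)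
  have "(\<integral>x. q x \<partial>lborel) = (\<integral>x. indicator {0<..} x *\<^sub>R q x + indicator {..<0} x *\<^sub>R q x \<partial>lborel)"
    by (rule integral_cong_AE[OF meas _ split]) (use meas in measurable)
  also have "\<dots> = (\<integral>x. indicator {0<..} x *\<^sub>R q x \<partial>lborel) + (\<integral>x. indicator {..<0} x *\<^sub>R q x \<partial>lborel)"
    by (rule Bochner_Integration.integral_add[OF pos neg])
  also have "(\<integral>x. indicator {..<0} x *\<^sub>R q x \<partial>lborel) = (\<integral>x. indicator {0<..} x *\<^sub>R q x \<partial>lborel)"
    using lborel_integral_real_affine[of "- 1" "\<lambda>x. indicator {..<0} x *\<^sub>R q x" 0]
    by (simp add: assms(2) indicator_def)
  also have "(\<integral>x. indicator {0<..} x *\<^sub>R q x \<partial>lborel) = integral {0<..} q"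
    using set_borel_integral_eq_integral(2)[of "{0<..}" q] pos
    by (simp add: set_integrable_def set_lebesgue_integral_def)
  finally show ?thesis
    by simp
qed

lemma lborel_integral_conj_symmetric:
  fixes w :: "real \<Rightarrow> complex"
  assumes "integrable lborel w" and "\<And>x. w (- x) = cnj (w x)"
  shows "(\<integral>x. w x \<partial>lborel) = of_real (2 * integral {0<..} (\<lambda>x. Re (w x)))"
proof -
  have "(\<integral>x. w x \<partial>lborel) = (\<integral>x. w (- x) \<partial>lborel)"
    using lborel_integral_real_affine[of "- 1" w 0] by simp
  also have "\<dots> = cnj (\<integral>x. w x \<partial>lborel)"
    by (simp add: assms(2))
  finally have "Im (\<integral>x. w x \<partial>lborel) = 0"
    by (metis cnj.simps(2) neg_equal_zero)
  moreover have "Re (\<integral>x. w x \<partial>lborel) = 2 * integral {0<..} (\<lambda>x. Re (w x))"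
    using integral_Re[OF assms(1)] lborel_integral_even[OF integrable_Re[OF assms(1)]] assms(2) by simp
  ultimately show ?thesis
    by (simp add: complex_eq_iff)
qed

lemma lborel_integrable_imp_absolutely_integrable_on:
  fixes f :: "'a::euclidean_space \<Rightarrow> 'b::{banach, second_countable_topology}"
  assumes "integrable lborel f" and "S \<in> sets lborel"
  shows "f absolutely_integrable_on S"
  unfolding set_integrable_def
  using assms by (intro integrable_mult_indicator) (auto simp: integrable_completion borel_measurable_integrable)

lemma integral_Ioi_substitute_square:
  fixes F :: "real \<Rightarrow> real"
  assumes "a > 0" and "(\<lambda>x. 2 * a * x * F (a * x\<^sup>2)) absolutely_integrable_on {0<..}"
  shows "integral {0<..} F = integral {0<..} (\<lambda>x. 2 * a * x * F (a * x\<^sup>2))"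
proof -
  have abs_eq: "\<bar>2 * a * x\<bar> * F (a * x\<^sup>2) = 2 * a * x * F (a * x\<^sup>2)" if "x \<in> {0<..}" for x
    using that assms(1) by simp
  have "(\<lambda>x. \<bar>2 * a * x\<bar> * F (a * x\<^sup>2)) absolutely_integrable_on {0<..}"
    using assms(2) by (subst set_integrable_cong[OF refl refl abs_eq])
  moreover have "integral {0<..} (\<lambda>x. \<bar>2 * a * x\<bar> * F (a * x\<^sup>2)) = integral {0<..} (\<lambda>x. 2 * a * x * F (a * x\<^sup>2))"
    using abs_eq by (rule integral_cong)
  ultimately have "F absolutely_integrable_on ((\<lambda>x. a * x\<^sup>2) ` {0<..}) \<and>
      integral ((\<lambda>x. a * x\<^sup>2) ` {0<..}) F = integral {0<..} (\<lambda>x. 2 * a * x * F (a * x\<^sup>2))"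
  proof (intro has_absolute_integral_change_of_variables_1'[where g' = "\<lambda>x. 2 * a * x", THEN iffD1] conjI)
    show "((\<lambda>x. a * x\<^sup>2) has_field_derivative 2 * a * x) (at x within {0<..})" for x
      by (auto intro!: derivative_eq_intros)
    show "inj_on (\<lambda>x. a * x\<^sup>2) {0<..}"
      using assms(1) by (auto simp: inj_on_def power2_eq_iff_nonneg)
  qed auto
  moreover have "(\<lambda>x. a * x\<^sup>2) ` {0<..} = {0<..}"
  proof (intro equalityI subsetI)
    fix r :: real
    assume "r \<in> {0<..}"
    then have "r = a * (sqrt (r / a))\<^sup>2" and "sqrt (r / a) \<in> {0<..}"
      using assms(1) by auto
    then show "r \<in> (\<lambda>x. a * x\<^sup>2) ` {0<..}"
      by blast
  qed (use assms(1) in auto)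
  ultimately show ?thesis
    by simp
qed

section \<open>Fresnel integrals\<close>

lemma gaussian_integral_half_line_limit:
  "((\<lambda>R. integral {0..R} (\<lambda>x::real. exp (- x\<^sup>2))) \<longlongrightarrow> sqrt pi / 2) at_top"
proof -
  have int: "integrable lborel (\<lambda>x. indicator {0..} x *\<^sub>R exp (- (x::real)\<^sup>2))"
    and val: "(\<integral>x. indicator {0..} x *\<^sub>R exp (- (x::real)\<^sup>2) \<partial>lborel) = sqrt pi / 2"
    using gaussian_moment_0 by (auto simp: has_bochner_integral_iff)
  have "integral {0..R} (\<lambda>x. exp (- x\<^sup>2)) =
      (\<integral>x. indicator {..R} x *\<^sub>R (indicator {0..} x *\<^sub>R exp (- x\<^sup>2)) \<partial>lborel)" for R :: real
  proof -
    have "set_integrable lborel {0..R} (\<lambda>x::real. exp (- x\<^sup>2))"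
      by (intro borel_integrable_atLeastAtMost' continuous_intros)
    moreover have "(\<lambda>x. indicator {..R} x *\<^sub>R (indicator {0..} x *\<^sub>R exp (- x\<^sup>2))) =
        (\<lambda>x. indicator {0..R} x *\<^sub>R exp (- x\<^sup>2))"
      by (auto simp: indicator_def fun_eq_iff)
    ultimately show ?thesis
      using set_borel_integral_eq_integral(2) unfolding set_lebesgue_integral_def by metis
  qed
  with tendsto_integral_at_top[OF _ int] show ?thesis
    unfolding val by simp
qed

lemma norm_integral_gaussian_vertical_segment_le:
  assumes "R > 0"
  shows "norm (integral {0..R} (\<lambda>v. exp (- (Complex R v)\<^sup>2))) \<le> 1 / R"
proof -
  have ftc: "((\<lambda>v. exp (- R * (R - v))) has_integral (1 / R - exp (- R * R) / R)) {0..R}"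
  proof -
    have "((\<lambda>v. exp (- R * (R - v))) has_integral (exp (- R * (R - R)) / R - exp (- R * (R - 0)) / R)) {0..R}"
    proof (rule fundamental_theorem_of_calculus)
      fix v assume "v \<in> {0..R}"
      have "((\<lambda>v. exp (- R * (R - v)) / R) has_real_derivative exp (- R * (R - v)) * R / R) (at v)"
        by (auto intro!: derivative_eq_intros)
      then show "((\<lambda>v. exp (- R * (R - v)) / R) has_vector_derivative exp (- R * (R - v))) (at v within {0..R})"
        using assms by (simp add: has_real_derivative_iff_has_vector_derivative[symmetric] has_field_derivative_at_within)
    qed (use assms in simp)
    then show ?thesis by simp
  qed
  have "norm (integral {0..R} (\<lambda>v. exp (- (Complex R v)\<^sup>2))) \<le> integral {0..R} (\<lambda>v. exp (- R * (R - v)))"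
  proof (rule integral_norm_bound_integral)
    fix v assume v: "v \<in> {0..R}"
    have "norm (exp (- (Complex R v)\<^sup>2)) = exp (- (R\<^sup>2 - v\<^sup>2))"
      by (simp add: norm_exp_eq_Re power2_eq_square)
    also have "\<dots> \<le> exp (- R * (R - v))"
      using v mult_right_mono[of v R v] by (auto simp: power2_eq_square algebra_simps)
    finally show "norm (exp (- (Complex R v)\<^sup>2)) \<le> exp (- R * (R - v))" .
  qed (use ftc in \<open>auto intro!: integrable_continuous_interval continuous_intros\<close>)
  also have "\<dots> \<le> 1 / R"
    using integral_unique[OF ftc] assms by simp
  finally show ?thesis .
qed

lemma gaussian_contour_integral_diagonal:
  assumes "R > 0"
  shows "((\<lambda>z. exp (- z\<^sup>2)) has_contour_integral
      (1 + \<i>) * integral {0..R} (\<lambda>s. exp (- (2 * \<i> * (of_real s)\<^sup>2)))) (linepath 0 ((1 + \<i>) * of_real R))"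
proof -
  define E :: "real \<Rightarrow> complex" where "E = (\<lambda>s. exp (- (2 * \<i> * (of_real s)\<^sup>2)))"
  define w where "w = (1 + \<i>) * of_real R"
  have "(E has_integral integral {0..R} E) (cbox 0 R)"
    unfolding E_def cbox_interval by (intro integrable_integral integrable_continuous_interval continuous_intros)
  from has_integral_affinity'[OF this assms, of 0]
  have "((\<lambda>x. E (R * x)) has_integral integral {0..R} E / of_real R) {0..1}"
    using assms by (simp add: scaleR_conv_of_real divide_inverse mult.commute)
  from has_integral_mult_left[OF this, of w]
  moreover have "integral {0..R} E / of_real R * w = (1 + \<i>) * integral {0..R} E"
    using assms by (simp add: w_def field_simps)
  moreover have "E (R * x) * w = exp (- (linepath 0 w x)\<^sup>2) * (w - 0)" for x
  proof -
    have "(of_real x * ((1 + \<i>) * of_real R))\<^sup>2 = 2 * \<i> * (of_real (R * x) :: complex)\<^sup>2"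
      by (simp add: power2_eq_square algebra_simps)
    then show ?thesis by (simp add: E_def scaleR_conv_of_real w_def)
  qed
  ultimately have "((\<lambda>z. exp (- z\<^sup>2)) has_contour_integral (1 + \<i>) * integral {0..R} E) (linepath 0 w)"
    unfolding has_contour_integral_linepath by simp
  then show ?thesis
    unfolding E_def w_def .
qed

text \<open>Cauchy's theorem on the triangle with vertices \<open>0\<close>, \<open>R\<close>, \<open>R + i R\<close> for \<open>exp (- z\<^sup>2)\<close>;
  on the hypotenuse \<open>z = (1 + i) s\<close> one has \<open>z\<^sup>2 = 2 i s\<^sup>2\<close>.\<close>
lemma fresnel_triangle_identity:
  assumes "R > 0"
  shows "(1 + \<i>) * integral {0..R} (\<lambda>s. exp (- (2 * \<i> * (of_real s)\<^sup>2))) =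
    of_real (integral {0..R} (\<lambda>x. exp (- x\<^sup>2))) + \<i> * integral {0..R} (\<lambda>v. exp (- (Complex R v)\<^sup>2))"
proof -
  define f :: "complex \<Rightarrow> complex" where "f = (\<lambda>z. exp (- z\<^sup>2))"
  define w where "w = (1 + \<i>) * of_real R"
  define G where "G = integral {0..R} (\<lambda>x. exp (- x\<^sup>2))"
  define V where "V = integral {0..R} (\<lambda>v. exp (- (Complex R v)\<^sup>2))"
  define F where "F = integral {0..R} (\<lambda>s. exp (- (2 * \<i> * (of_real s)\<^sup>2)))"
  have "(f has_contour_integral of_real G) (linepath 0 (of_real R))"
  proof -
    have "((\<lambda>x::real. exp (- x\<^sup>2)) has_integral G) {0..R}"
      unfolding G_def by (intro integrable_integral integrable_continuous_interval continuous_intros)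
    moreover have "(\<lambda>x. f (of_real x)) = (\<lambda>x. of_real (exp (- x\<^sup>2)))"
      by (simp add: f_def fun_eq_iff flip: exp_of_real)
    ultimately have "((\<lambda>x. f (of_real x)) has_integral of_real G) {0..R}"
      using has_integral_of_real by metis
    then show ?thesis
      using has_contour_integral_linepath_Reals_iff[of 0 "of_real R" f] assms by simp
  qed
  moreover have "(f has_contour_integral (\<i> * V)) (linepath (of_real R) w)"
  proof -
    have "((\<lambda>v. f (Complex R v)) has_integral V) {0..R}"
      unfolding V_def f_def by (intro integrable_integral integrable_continuous_interval continuous_intros)
    then show ?thesis
      using has_contour_integral_linepath_same_Re_iff[of "of_real R" R w 0 R f "\<i> * V"] assms
      by (simp add: w_def)
  qed
  moreover have "(f has_contour_integral (- ((1 + \<i>) * F))) (linepath w 0)"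
    using has_contour_integral_reversepath[OF _ gaussian_contour_integral_diagonal[OF assms]]
    by (simp add: f_def w_def F_def)
  ultimately have "(f has_contour_integral (of_real G + (\<i> * V + - ((1 + \<i>) * F))))
      (linepath 0 (of_real R) +++ linepath (of_real R) w +++ linepath w 0)"
    by (intro has_contour_integral_join valid_path_join) auto
  moreover have "(f has_contour_integral 0) (linepath 0 (of_real R) +++ linepath (of_real R) w +++ linepath w 0)"
    by (rule Cauchy_theorem_triangle) (auto simp: f_def intro!: holomorphic_intros)
  ultimately have "of_real G + (\<i> * V + - ((1 + \<i>) * F)) = 0"
    by (rule has_contour_integral_unique)
  then show ?thesis
    unfolding F_def G_def V_def by (simp add: algebra_simps eq_neg_iff_add_eq_0)
qed

lemma fresnel_integral_half_line_limit:
  "((\<lambda>R. integral {0..R} (\<lambda>s. exp (- (2 * \<i> * (of_real s)\<^sup>2)))) \<longlongrightarrow> of_real (sqrt pi / 2) / (1 + \<i>)) at_top"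
proof -
  define V where "V R = integral {0..R} (\<lambda>v. exp (- (Complex R v)\<^sup>2))" for R
  have "(V \<longlongrightarrow> 0) at_top"
  proof (rule Lim_null_comparison)
    show "\<forall>\<^sub>F R in at_top. norm (V R) \<le> 1 / R"
      using eventually_gt_at_top[of 0]
      by eventually_elim (simp add: V_def norm_integral_gaussian_vertical_segment_le)
    show "((\<lambda>R::real. 1 / R) \<longlongrightarrow> 0) at_top"
      by (intro tendsto_divide_0[OF tendsto_const] filterlim_at_top_imp_at_infinity filterlim_ident)
  qed
  moreover have "1 + \<i> \<noteq> 0"
    by (simp add: complex_eq_iff)
  ultimately have "((\<lambda>R. (of_real (integral {0..R} (\<lambda>x. exp (- x\<^sup>2))) + \<i> * V R) / (1 + \<i>))
      \<longlongrightarrow> (of_real (sqrt pi / 2) + \<i> * 0) / (1 + \<i>)) at_top"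
    by (intro tendsto_intros gaussian_integral_half_line_limit)
  moreover have "\<forall>\<^sub>F R in at_top. (of_real (integral {0..R} (\<lambda>x. exp (- x\<^sup>2))) + \<i> * V R) / (1 + \<i>) =
      integral {0..R} (\<lambda>s. exp (- (2 * \<i> * (of_real s)\<^sup>2)))"
    using eventually_gt_at_top[of 0]
  proof eventually_elim
    case (elim R)
    with fresnel_triangle_identity[OF elim] \<open>1 + \<i> \<noteq> 0\<close> show ?case
      unfolding V_def by (simp add: field_simps)
  qed
  ultimately show ?thesis
    by (simp add: Lim_transform_eventually)
qed

lemma fresnel_integral:
  "((\<lambda>s. exp (- (2 * \<i> * (of_real s)\<^sup>2))) has_integral of_real (sqrt (pi / 2)) * exp (- \<i> * of_real (pi / 4))) UNIV"
proof -
  have "((\<lambda>s. exp (- (2 * \<i> * (of_real s)\<^sup>2))) has_integral 2 *\<^sub>R (of_real (sqrt pi / 2) / (1 + \<i>))) UNIV"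
    by (rule has_integral_UNIV_even_real[OF _ _ fresnel_integral_half_line_limit]) (auto intro!: continuous_intros)
  moreover have "2 *\<^sub>R (of_real (sqrt pi / 2) / (1 + \<i>)) = of_real (sqrt (pi / 2)) * exp (- \<i> * of_real (pi / 4))"
  proof -
    have "exp (- \<i> * of_real (pi / 4)) = cis (- (pi / 4))"
      by (simp add: cis_conv_exp)
    also have "\<dots> = of_real (sqrt 2 / 2) * (1 - \<i>)"
      by (simp add: cis.code cos_45 sin_45 complex_eq_iff)
    finally have "exp (- \<i> * of_real (pi / 4)) = of_real (sqrt 2 / 2) * (1 - \<i>)" .
    moreover have "2 *\<^sub>R (of_real (sqrt pi / 2) / (1 + \<i>)) = of_real (sqrt pi / 2) * (1 - \<i>)"
      by (simp add: scaleR_conv_of_real field_simps complex_eq_iff Re_divide Im_divide)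
    moreover have "sqrt (pi / 2) * (sqrt 2 / 2) = sqrt pi / 2"
      by (simp add: real_sqrt_divide)
    ultimately show ?thesis
      by (metis mult.assoc of_real_mult)
  qed
  ultimately show ?thesis
    by simp
qed

definition chirp_integral :: "real \<Rightarrow> real \<Rightarrow> complex" where
  "chirp_integral c y =
     of_real (sqrt (pi / \<bar>c\<bar>)) * exp (- \<i> * of_real (pi * sgn c / 4)) * exp (\<i> * of_real (y\<^sup>2 / (4 * c)))"

lemma has_integral_chirp_pos:
  assumes "c > 0"
  shows "((\<lambda>\<eta>. exp (\<i> * of_real (y * \<eta> - c * \<eta>\<^sup>2))) has_integral chirp_integral c y) UNIV"
proof -
  define \<sigma> where "\<sigma> = sqrt (c / 2)"
  define \<eta>\<^sub>0 where "\<eta>\<^sub>0 = y / (2 * c)"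
  define A where "A = exp (\<i> * of_real (y\<^sup>2 / (4 * c)))"
  have "\<sigma> > 0"
    using assms by (simp add: \<sigma>_def)
  from has_integral_mult_right[OF has_integral_UNIV_real_affinity[OF fresnel_integral this], of A]
  have "((\<lambda>\<eta>. A * exp (- (2 * \<i> * (of_real (\<sigma> * \<eta> + - \<sigma> * \<eta>\<^sub>0))\<^sup>2))) has_integral
      A * (of_real (sqrt (pi / 2)) * exp (- \<i> * of_real (pi / 4)) /\<^sub>R \<sigma>)) UNIV" .
  moreover have "A * exp (- (2 * \<i> * (of_real (\<sigma> * \<eta> + - \<sigma> * \<eta>\<^sub>0))\<^sup>2)) = exp (\<i> * of_real (y * \<eta> - c * \<eta>\<^sup>2))"
    for \<eta>
  proof -
    have "2 * (\<sigma> * \<eta> + - \<sigma> * \<eta>\<^sub>0)\<^sup>2 = c * \<eta>\<^sup>2 - y * \<eta> + y\<^sup>2 / (4 * c)"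
      using assms by (simp add: \<sigma>_def \<eta>\<^sub>0_def power2_eq_square field_simps)
    then have "y\<^sup>2 / (4 * c) - 2 * (\<sigma> * \<eta> + - \<sigma> * \<eta>\<^sub>0)\<^sup>2 = y * \<eta> - c * \<eta>\<^sup>2"
      by simp
    moreover have "A * exp (- (2 * \<i> * (of_real (\<sigma> * \<eta> + - \<sigma> * \<eta>\<^sub>0))\<^sup>2)) =
        exp (\<i> * of_real (y\<^sup>2 / (4 * c) - 2 * (\<sigma> * \<eta> + - \<sigma> * \<eta>\<^sub>0)\<^sup>2))"
      unfolding A_def exp_add[symmetric] by (simp add: algebra_simps)
    ultimately show ?thesis
      by simp
  qed
  moreover have "A * (of_real (sqrt (pi / 2)) * exp (- \<i> * of_real (pi / 4)) /\<^sub>R \<sigma>) = chirp_integral c y"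
  proof -
    have "sqrt (pi / c) = sqrt (pi / 2) / \<sigma>"
      using assms by (simp add: \<sigma>_def real_sqrt_divide field_simps)
    then show ?thesis
      using assms \<open>\<sigma> > 0\<close> by (simp add: chirp_integral_def A_def scaleR_conv_of_real field_simps flip: of_real_mult)
  qed
  ultimately show ?thesis
    by simp
qed

lemma has_integral_chirp:
  assumes "c \<noteq> 0"
  shows "((\<lambda>\<eta>. exp (\<i> * of_real (y * \<eta> - c * \<eta>\<^sup>2))) has_integral chirp_integral c y) UNIV"
proof (cases "c > 0")
  case True
  then show ?thesis
    by (rule has_integral_chirp_pos)
next
  case False
  with assms have "- c > 0"
    by simp
  from has_integral_chirp_pos[OF this, of "- y"]
  have "((cnj \<circ> (\<lambda>\<eta>. exp (\<i> * of_real (- y * \<eta> - - c * \<eta>\<^sup>2)))) has_integral cnj (chirp_integral (- c) (- y))) UNIV"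
    by (simp only: has_integral_cnj)
  moreover have "cnj (chirp_integral (- c) (- y)) = chirp_integral c y"
    by (simp add: chirp_integral_def exp_cnj sgn_minus)
  ultimately show ?thesis
    by (simp add: o_def exp_cnj algebra_simps)
qed

section \<open>Differentiating Fourier integrals\<close>

lemma norm_iexp_sub_one_le: "norm (exp (\<i> * of_real u) - 1) \<le> \<bar>u\<bar>"
  using iexp_approx1[of u 0] by simp

lemma norm_iexp_sub_one_sub_linear_le: "norm (exp (\<i> * of_real u) - 1 - \<i> * of_real u) \<le> u\<^sup>2 / 2"
  using iexp_approx1[of u 1] by (simp add: power2_eq_square abs_mult algebra_simps)

lemma has_vector_derivative_quadratic_remainder:
  fixes f :: "real \<Rightarrow> 'a::real_normed_vector"
  assumes "\<And>y. norm (f y - f x - (y - x) *\<^sub>R D) \<le> M * (y - x)\<^sup>2"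
  shows "(f has_vector_derivative D) (at x)"
  unfolding has_vector_derivative_def has_derivative_at_alt
proof (intro conjI allI impI bounded_linear_scaleR_left)
  fix e :: real
  assume "e > 0"
  show "\<exists>d>0. \<forall>y. norm (y - x) < d \<longrightarrow> norm (f y - f x - (y - x) *\<^sub>R D) \<le> e * norm (y - x)"
  proof (intro exI[of _ "e / (\<bar>M\<bar> + 1)"] conjI allI impI)
    show "e / (\<bar>M\<bar> + 1) > 0"
      using \<open>e > 0\<close> by simp
    fix y
    assume "norm (y - x) < e / (\<bar>M\<bar> + 1)"
    then have "\<bar>M\<bar> * \<bar>y - x\<bar> \<le> e"
      by (simp add: field_simps)
    have "norm (f y - f x - (y - x) *\<^sub>R D) \<le> M * (y - x)\<^sup>2"
      by (rule assms)
    also have "\<dots> \<le> (\<bar>M\<bar> * \<bar>y - x\<bar>) * \<bar>y - x\<bar>"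
      using mult_right_mono[OF abs_ge_self[of M] zero_le_power2[of "y - x"]]
      by (simp add: power2_eq_square abs_mult_self_eq mult.assoc)
    also have "\<dots> \<le> e * \<bar>y - x\<bar>"
      using \<open>\<bar>M\<bar> * \<bar>y - x\<bar> \<le> e\<close> by (intro mult_right_mono) auto
    finally show "norm (f y - f x - (y - x) *\<^sub>R D) \<le> e * norm (y - x)"
      by simp
  qed
qed

lemma integrable_iexp_mult:
  fixes f :: "real \<Rightarrow> complex"
  assumes "integrable lborel f"
  shows "integrable lborel (\<lambda>\<xi>. exp (\<i> * of_real (x * \<xi>)) * f \<xi>)"
proof (rule Bochner_Integration.integrable_bound[OF assms])
  show "(\<lambda>\<xi>. exp (\<i> * of_real (x * \<xi>)) * f \<xi>) \<in> borel_measurable lborel"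
    using borel_measurable_integrable[OF assms] by measurable
qed (simp add: norm_mult)

lemma fourier_integral_first_order_remainder:
  fixes g :: "real \<Rightarrow> complex"
  assumes "integrable lborel g" and "integrable lborel (\<lambda>\<xi>. of_real \<xi> * g \<xi>)"
  shows "(\<integral>\<xi>. exp (\<i> * of_real (y * \<xi>)) * g \<xi> \<partial>lborel) - (\<integral>\<xi>. exp (\<i> * of_real (x * \<xi>)) * g \<xi> \<partial>lborel) -
      (y - x) *\<^sub>R (\<integral>\<xi>. exp (\<i> * of_real (x * \<xi>)) * (\<i> * of_real \<xi> * g \<xi>) \<partial>lborel) =
    (\<integral>\<xi>. exp (\<i> * of_real (x * \<xi>)) *
      ((exp (\<i> * of_real ((y - x) * \<xi>)) - 1 - \<i> * of_real ((y - x) * \<xi>)) * g \<xi>) \<partial>lborel)"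
proof -
  have "integrable lborel (\<lambda>\<xi>. \<i> * of_real \<xi> * g \<xi>)"
    using integrable_mult_right[OF assms(2), of \<i>] by (simp add: mult.assoc)
  then have "(\<integral>\<xi>. exp (\<i> * of_real (y * \<xi>)) * g \<xi> \<partial>lborel) - (\<integral>\<xi>. exp (\<i> * of_real (x * \<xi>)) * g \<xi> \<partial>lborel) -
      (y - x) *\<^sub>R (\<integral>\<xi>. exp (\<i> * of_real (x * \<xi>)) * (\<i> * of_real \<xi> * g \<xi>) \<partial>lborel) =
      (\<integral>\<xi>. exp (\<i> * of_real (y * \<xi>)) * g \<xi> - exp (\<i> * of_real (x * \<xi>)) * g \<xi> -
        of_real (y - x) * (exp (\<i> * of_real (x * \<xi>)) * (\<i> * of_real \<xi> * g \<xi>)) \<partial>lborel)"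
    using integrable_iexp_mult[OF assms(1), of y] integrable_iexp_mult[OF assms(1), of x]
      integrable_iexp_mult[OF \<open>integrable lborel (\<lambda>\<xi>. \<i> * of_real \<xi> * g \<xi>)\<close>, of x]
    by (simp add: scaleR_conv_of_real integrable_mult_right Bochner_Integration.integral_diff)
  also have "\<dots> = (\<integral>\<xi>. exp (\<i> * of_real (x * \<xi>)) *
      ((exp (\<i> * of_real ((y - x) * \<xi>)) - 1 - \<i> * of_real ((y - x) * \<xi>)) * g \<xi>) \<partial>lborel)"
  proof (rule Bochner_Integration.integral_cong[OF refl])
    fix \<xi>
    have "exp (\<i> * of_real (y * \<xi>)) = exp (\<i> * of_real (x * \<xi>)) * exp (\<i> * of_real ((y - x) * \<xi>))"
      by (simp add: exp_add[symmetric] algebra_simps)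
    then show "exp (\<i> * of_real (y * \<xi>)) * g \<xi> - exp (\<i> * of_real (x * \<xi>)) * g \<xi> -
        of_real (y - x) * (exp (\<i> * of_real (x * \<xi>)) * (\<i> * of_real \<xi> * g \<xi>)) =
        exp (\<i> * of_real (x * \<xi>)) * ((exp (\<i> * of_real ((y - x) * \<xi>)) - 1 - \<i> * of_real ((y - x) * \<xi>)) * g \<xi>)"
      by (simp add: algebra_simps)
  qed
  finally show ?thesis .
qed

lemma has_vector_derivative_fourier_integral:
  fixes g :: "real \<Rightarrow> complex"
  assumes "integrable lborel g" and "integrable lborel (\<lambda>\<xi>. of_real \<xi> * g \<xi>)"
    and "integrable lborel (\<lambda>\<xi>. (of_real \<xi>)\<^sup>2 * g \<xi>)"
  shows "((\<lambda>x. \<integral>\<xi>. exp (\<i> * of_real (x * \<xi>)) * g \<xi> \<partial>lborel) has_vector_derivative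
      (\<integral>\<xi>. exp (\<i> * of_real (x * \<xi>)) * (\<i> * of_real \<xi> * g \<xi>) \<partial>lborel)) (at x)"
proof (rule has_vector_derivative_quadratic_remainder)
  fix y
  define r where "r \<xi> = exp (\<i> * of_real (x * \<xi>)) *
    ((exp (\<i> * of_real ((y - x) * \<xi>)) - 1 - \<i> * of_real ((y - x) * \<xi>)) * g \<xi>)" for \<xi>
  have r_le: "norm (r \<xi>) \<le> (y - x)\<^sup>2 / 2 * norm ((of_real \<xi>)\<^sup>2 * g \<xi>)" for \<xi>
  proof -
    have "norm (r \<xi>) = norm (exp (\<i> * of_real ((y - x) * \<xi>)) - 1 - \<i> * of_real ((y - x) * \<xi>)) * norm (g \<xi>)"
      by (simp add: r_def norm_mult)
    also have "\<dots> \<le> ((y - x) * \<xi>)\<^sup>2 / 2 * norm (g \<xi>)"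
      by (intro mult_right_mono norm_iexp_sub_one_sub_linear_le) auto
    finally show ?thesis
      by (simp add: norm_mult norm_power power_mult_distrib)
  qed
  have "integrable lborel r"
  proof (rule Bochner_Integration.integrable_bound)
    show "integrable lborel (\<lambda>\<xi>. (y - x)\<^sup>2 / 2 * norm ((of_real \<xi>)\<^sup>2 * g \<xi>))"
      using integrable_norm[OF assms(3)] by simp
    show "r \<in> borel_measurable lborel"
      unfolding r_def using borel_measurable_integrable[OF assms(1)] by measurable
  qed (use r_le order_trans in auto)
  then have "norm (\<integral>\<xi>. r \<xi> \<partial>lborel) \<le> (\<integral>\<xi>. (y - x)\<^sup>2 / 2 * norm ((of_real \<xi>)\<^sup>2 * g \<xi>) \<partial>lborel)"
    using integrable_norm[OF assms(3)] r_le by (intro Bochner_Integration.integral_norm_bound_integral) auto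
  then show "norm ((\<integral>\<xi>. exp (\<i> * of_real (y * \<xi>)) * g \<xi> \<partial>lborel) - (\<integral>\<xi>. exp (\<i> * of_real (x * \<xi>)) * g \<xi> \<partial>lborel) -
      (y - x) *\<^sub>R (\<integral>\<xi>. exp (\<i> * of_real (x * \<xi>)) * (\<i> * of_real \<xi> * g \<xi>) \<partial>lborel))
      \<le> (\<integral>\<xi>. norm ((of_real \<xi>)\<^sup>2 * g \<xi>) \<partial>lborel) / 2 * (y - x)\<^sup>2"
    unfolding fourier_integral_first_order_remainder[OF assms(1,2)] r_def by (simp add: mult_ac)
qed

lemma xderiv_fourier_integral:
  fixes h :: "real \<Rightarrow> complex"
  assumes "\<And>m. integrable lborel (\<lambda>\<xi>. (of_real \<xi>) ^ m * h \<xi>)"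
  shows "xderiv l (\<lambda>x. \<integral>\<xi>. exp (\<i> * of_real (x * \<xi>)) * h \<xi> \<partial>lborel) =
    (\<lambda>x. \<integral>\<xi>. exp (\<i> * of_real (x * \<xi>)) * ((\<i> * of_real \<xi>) ^ l * h \<xi>) \<partial>lborel)"
proof (induction l)
  case 0
  show ?case
    by (simp add: xderiv_def)
next
  case (Suc l)
  have moments: "integrable lborel (\<lambda>\<xi>. (of_real \<xi>) ^ j * ((\<i> * of_real \<xi>) ^ l * h \<xi>))" for j
    using integrable_mult_right[OF assms[of "j + l"], of "\<i> ^ l"]
    by (simp add: power_mult_distrib power_add mult_ac)
  have deriv: "((\<lambda>x. \<integral>\<xi>. exp (\<i> * of_real (x * \<xi>)) * ((\<i> * of_real \<xi>) ^ l * h \<xi>) \<partial>lborel) has_vector_derivative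
      (\<integral>\<xi>. exp (\<i> * of_real (x * \<xi>)) * ((\<i> * of_real \<xi>) ^ Suc l * h \<xi>) \<partial>lborel)) (at x)" for x
    using has_vector_derivative_fourier_integral[of "\<lambda>\<xi>. (\<i> * of_real \<xi>) ^ l * h \<xi>" x]
      moments[of 0] moments[of 1] moments[of 2]
    by (simp add: mult_ac)
  have "xderiv (Suc l) f = (\<lambda>x. vector_derivative (xderiv l f) (at x))" for f
    by (simp add: xderiv_def)
  then show ?case
    using vector_derivative_at[OF deriv] Suc.IH by simp
qed

section \<open>Gaussian moments\<close>

lemma integrable_abs_power_gaussian:
  assumes "a > 0"
  shows "integrable lborel (\<lambda>x::real. \<bar>x\<bar> ^ k * exp (- a * x\<^sup>2))"
proof -
  define \<sigma> where "\<sigma> = 1 / sqrt (2 * a)"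
  have "\<sigma> > 0"
    using assms by (simp add: \<sigma>_def)
  have density: "sqrt (2 * pi * \<sigma>\<^sup>2) * (normal_density 0 \<sigma> x * \<bar>x - 0\<bar> ^ k) = \<bar>x\<bar> ^ k * exp (- a * x\<^sup>2)" for x
  proof -
    have "- (x - 0)\<^sup>2 / (2 * \<sigma>\<^sup>2) = - a * x\<^sup>2"
      using assms by (simp add: \<sigma>_def power_divide)
    with \<open>\<sigma> > 0\<close> show ?thesis
      unfolding normal_density_def by simp
  qed
  have "integrable lborel (\<lambda>x. sqrt (2 * pi * \<sigma>\<^sup>2) * (normal_density 0 \<sigma> x * \<bar>x - 0\<bar> ^ k))"
    by (intro integrable_mult_right integrable_normal_moment_abs \<open>\<sigma> > 0\<close>)
  then show ?thesis
    unfolding density .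
qed

lemma integrable_abs_power_sqrt_gaussian:
  assumes "a > 0"
  shows "integrable lborel (\<lambda>\<xi>::real. \<bar>\<xi>\<bar> ^ n * sqrt \<bar>\<xi>\<bar> * exp (- a * \<xi>\<^sup>2))"
proof (rule Bochner_Integration.integrable_bound)
  show "integrable lborel (\<lambda>\<xi>::real. \<bar>\<xi>\<bar> ^ n * exp (- a * \<xi>\<^sup>2) + \<bar>\<xi>\<bar> ^ Suc n * exp (- a * \<xi>\<^sup>2))"
    by (intro Bochner_Integration.integrable_add integrable_abs_power_gaussian assms)
  show "AE \<xi> in lborel. norm (\<bar>\<xi>\<bar> ^ n * sqrt \<bar>\<xi>\<bar> * exp (- a * \<xi>\<^sup>2)) \<le>
      norm (\<bar>\<xi>\<bar> ^ n * exp (- a * \<xi>\<^sup>2) + \<bar>\<xi>\<bar> ^ Suc n * exp (- a * \<xi>\<^sup>2))"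
  proof (rule AE_I2)
    fix \<xi> :: real
    have "sqrt \<bar>\<xi>\<bar> \<le> 1 + \<bar>\<xi>\<bar>"
      by (rule real_le_lsqrt) (auto simp: power2_eq_square algebra_simps)
    then have "\<bar>\<xi>\<bar> ^ n * sqrt \<bar>\<xi>\<bar> * exp (- a * \<xi>\<^sup>2) \<le> \<bar>\<xi>\<bar> ^ n * (1 + \<bar>\<xi>\<bar>) * exp (- a * \<xi>\<^sup>2)"
      by (intro mult_right_mono mult_left_mono) auto
    then show "norm (\<bar>\<xi>\<bar> ^ n * sqrt \<bar>\<xi>\<bar> * exp (- a * \<xi>\<^sup>2)) \<le>
        norm (\<bar>\<xi>\<bar> ^ n * exp (- a * \<xi>\<^sup>2) + \<bar>\<xi>\<bar> ^ Suc n * exp (- a * \<xi>\<^sup>2))"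
      by (simp add: algebra_simps)
  qed
qed measurable

lemma integral_abs_power_sqrt_gaussian:
  assumes "a > 0"
  shows "(\<integral>\<xi>. \<bar>\<xi>\<bar> ^ n * sqrt \<bar>\<xi>\<bar> * exp (- a * \<xi>\<^sup>2) \<partial>lborel) =
    a powr (- (2 * real n + 3) / 4) * (\<integral>u. \<bar>u\<bar> ^ n * sqrt \<bar>u\<bar> * exp (- u\<^sup>2) \<partial>lborel)"
proof -
  define c where "c = 1 / sqrt a"
  have "c > 0"
    using assms by (simp add: c_def)
  have "(\<integral>\<xi>. \<bar>\<xi>\<bar> ^ n * sqrt \<bar>\<xi>\<bar> * exp (- a * \<xi>\<^sup>2) \<partial>lborel) =
      \<bar>c\<bar> *\<^sub>R (\<integral>u. \<bar>0 + c * u\<bar> ^ n * sqrt \<bar>0 + c * u\<bar> * exp (- a * (0 + c * u)\<^sup>2) \<partial>lborel)"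
    using \<open>c > 0\<close> by (intro lborel_integral_real_affine) simp
  also have "(\<lambda>u. \<bar>0 + c * u\<bar> ^ n * sqrt \<bar>0 + c * u\<bar> * exp (- a * (0 + c * u)\<^sup>2)) =
      (\<lambda>u. (c ^ n * sqrt c) * (\<bar>u\<bar> ^ n * sqrt \<bar>u\<bar> * exp (- u\<^sup>2)))"
  proof
    fix u
    have "a * (c * u)\<^sup>2 = u\<^sup>2"
      using assms by (simp add: c_def power_mult_distrib power_divide)
    then show "\<bar>0 + c * u\<bar> ^ n * sqrt \<bar>0 + c * u\<bar> * exp (- a * (0 + c * u)\<^sup>2) =
        (c ^ n * sqrt c) * (\<bar>u\<bar> ^ n * sqrt \<bar>u\<bar> * exp (- u\<^sup>2))"
      using \<open>c > 0\<close> by (simp add: abs_mult power_mult_distrib real_sqrt_mult mult_ac)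
  qed
  also have "\<bar>c\<bar> *\<^sub>R (\<integral>u. (c ^ n * sqrt c) * (\<bar>u\<bar> ^ n * sqrt \<bar>u\<bar> * exp (- u\<^sup>2)) \<partial>lborel) =
      (c * c ^ n * sqrt c) * (\<integral>u. \<bar>u\<bar> ^ n * sqrt \<bar>u\<bar> * exp (- u\<^sup>2) \<partial>lborel)"
    using \<open>c > 0\<close> by simp
  also have "c * c ^ n * sqrt c = a powr (- (2 * real n + 3) / 4)"
  proof -
    have "c = a powr (- 1 / 2)"
      using assms by (simp add: c_def powr_half_sqrt[symmetric] powr_minus_divide)
    have "c * c ^ n * sqrt c = c powr 1 * c powr (real n) * c powr (1 / 2)"
      using \<open>c > 0\<close> by (simp add: powr_realpow powr_half_sqrt)
    also have "\<dots> = c powr (1 + real n + 1 / 2)"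
      by (simp only: powr_add)
    also have "\<dots> = a powr (- 1 / 2 * (1 + real n + 1 / 2))"
      unfolding \<open>c = a powr (- 1 / 2)\<close> by (simp add: powr_powr)
    also have "- 1 / 2 * (1 + real n + 1 / 2) = - (2 * real n + 3) / 4"
      by (simp add: field_simps)
    finally show ?thesis .
  qed
  finally show ?thesis .
qed

lemma integrable_moments_of_gaussian_bound:
  fixes f :: "real \<Rightarrow> 'a::{real_normed_field, banach, second_countable_topology}"
  assumes "a > 0" and "f \<in> borel_measurable lborel"
    and "\<And>\<xi>. norm (f \<xi>) \<le> C * (sqrt \<bar>\<xi>\<bar> * exp (- a * \<xi>\<^sup>2))"
  shows "integrable lborel (\<lambda>\<xi>. (of_real \<xi>) ^ m * f \<xi>)"
proof (rule Bochner_Integration.integrable_bound)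
  show "integrable lborel (\<lambda>\<xi>. C * (\<bar>\<xi>\<bar> ^ m * sqrt \<bar>\<xi>\<bar> * exp (- a * \<xi>\<^sup>2)))"
    using integrable_abs_power_sqrt_gaussian[OF assms(1)] by simp
  show "AE \<xi> in lborel. norm ((of_real \<xi>) ^ m * f \<xi>) \<le> norm (C * (\<bar>\<xi>\<bar> ^ m * sqrt \<bar>\<xi>\<bar> * exp (- a * \<xi>\<^sup>2)))"
  proof (rule AE_I2)
    fix \<xi> :: real
    have "norm ((of_real \<xi>) ^ m * f \<xi>) \<le> \<bar>\<xi>\<bar> ^ m * (C * (sqrt \<bar>\<xi>\<bar> * exp (- a * \<xi>\<^sup>2)))"
      unfolding norm_mult norm_power norm_of_real by (intro mult_left_mono assms(3)) auto
    also have "\<dots> \<le> \<bar>C\<bar> * (\<bar>\<xi>\<bar> ^ m * sqrt \<bar>\<xi>\<bar> * exp (- a * \<xi>\<^sup>2))"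
      using mult_right_mono[OF abs_ge_self[of C], of "\<bar>\<xi>\<bar> ^ m * sqrt \<bar>\<xi>\<bar> * exp (- a * \<xi>\<^sup>2)"]
      by (simp add: mult_ac)
    finally show "norm ((of_real \<xi>) ^ m * f \<xi>) \<le> norm (C * (\<bar>\<xi>\<bar> ^ m * sqrt \<bar>\<xi>\<bar> * exp (- a * \<xi>\<^sup>2)))"
      by (simp add: mult_ac abs_mult)
  qed
qed (use assms(2) in measurable)

section \<open>S and K as Fourier integrals in x\<close>

text \<open>(\<integral> exp (i y \<eta>) exp (- \<nu> t \<xi>^2 - i t \<epsilon> \<eta>^2 / \<xi>) d\<eta>) / (4 pi^2): the symbol of S with \<eta> integrated
  out, except for the Airy factor exp (i t \<xi>^3).\<close>
definition K_symbol :: "real \<Rightarrow> real \<Rightarrow> real \<Rightarrow> real \<Rightarrow> real \<Rightarrow> complex" where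
  "K_symbol \<epsilon> \<nu> t y \<xi> = exp (of_real (- \<nu> * t * \<xi>\<^sup>2)) * chirp_integral (t * \<epsilon> / \<xi>) y / (4 * of_real (pi\<^sup>2))"

lemma iexp_mult_K_symbol:
  assumes "\<epsilon> \<in> {-1, 1}" and "t > 0"
  shows "exp (\<i> * of_real (x * \<xi>)) * K_symbol \<epsilon> \<nu> t y \<xi> =
    of_real (sqrt (pi / t) * sqrt \<bar>\<xi>\<bar> * exp (- \<nu> * t * \<xi>\<^sup>2) / (4 * pi\<^sup>2)) *
    cis (x * \<xi> + y\<^sup>2 * \<xi> / (4 * t * \<epsilon>) - pi * \<epsilon> * sgn \<xi> / 4)"
proof (cases "\<xi> = 0")
  case True
  \<comment> \<open>both sides vanish, because t \<epsilon> / 0 = 0 and hence sqrt (pi / \<bar>t \<epsilon> / 0\<bar>) = 0\<close>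
  then show ?thesis
    by (simp add: K_symbol_def chirp_integral_def)
next
  case False
  have "\<bar>\<epsilon>\<bar> = 1" and "sgn \<epsilon> = \<epsilon>"
    using assms(1) by auto
  with False assms(2) have amplitude: "sqrt (pi / \<bar>t * \<epsilon> / \<xi>\<bar>) = sqrt (pi / t) * sqrt \<bar>\<xi>\<bar>"
    by (simp add: abs_mult abs_divide real_sqrt_mult[symmetric])
  have phase: "x * \<xi> + y\<^sup>2 * \<xi> / (4 * t * \<epsilon>) - pi * \<epsilon> * sgn \<xi> / 4 =
      x * \<xi> - pi * sgn (t * \<epsilon> / \<xi>) / 4 + y\<^sup>2 / (4 * (t * \<epsilon> / \<xi>))"
    using False assms(2) \<open>sgn \<epsilon> = \<epsilon>\<close> \<open>\<bar>\<epsilon>\<bar> = 1\<close> by (auto simp: sgn_mult sgn_divide field_simps)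
  have "\<i> * of_real (x * \<xi> - pi * sgn (t * \<epsilon> / \<xi>) / 4 + y\<^sup>2 / (4 * (t * \<epsilon> / \<xi>))) =
      \<i> * of_real (x * \<xi>) + - \<i> * of_real (pi * sgn (t * \<epsilon> / \<xi>) / 4) + \<i> * of_real (y\<^sup>2 / (4 * (t * \<epsilon> / \<xi>)))"
    by (simp only: of_real_add of_real_diff distrib_left) (simp add: algebra_simps)
  then have "cis (x * \<xi> + y\<^sup>2 * \<xi> / (4 * t * \<epsilon>) - pi * \<epsilon> * sgn \<xi> / 4) =
      exp (\<i> * of_real (x * \<xi>)) * exp (- \<i> * of_real (pi * sgn (t * \<epsilon> / \<xi>) / 4)) *
      exp (\<i> * of_real (y\<^sup>2 / (4 * (t * \<epsilon> / \<xi>))))"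
    unfolding phase cis_conv_exp by (simp only: exp_add)
  then show ?thesis
    unfolding K_symbol_def chirp_integral_def amplitude by (simp add: exp_of_real[symmetric] mult_ac)
qed

lemma norm_K_symbol:
  assumes "\<epsilon> \<in> {-1, 1}" and "t > 0"
  shows "norm (K_symbol \<epsilon> \<nu> t y \<xi>) = sqrt (pi / t) * sqrt \<bar>\<xi>\<bar> * exp (- \<nu> * t * \<xi>\<^sup>2) / (4 * pi\<^sup>2)"
proof -
  have "norm (K_symbol \<epsilon> \<nu> t y \<xi>) = norm (exp (\<i> * of_real (0 * \<xi>)) * K_symbol \<epsilon> \<nu> t y \<xi>)"
    by simp
  also have "\<dots> = \<bar>sqrt (pi / t) * sqrt \<bar>\<xi>\<bar> * exp (- \<nu> * t * \<xi>\<^sup>2) / (4 * pi\<^sup>2)\<bar>"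
    unfolding iexp_mult_K_symbol[OF assms] norm_mult norm_of_real norm_cis by simp
  finally show ?thesis
    using assms(2) by simp
qed

lemma K_symbol_measurable [measurable]: "K_symbol \<epsilon> \<nu> t y \<in> borel_measurable lborel"
  unfolding K_symbol_def[abs_def] chirp_integral_def by measurable

lemma integrable_moments_K_symbol_mult:
  assumes "\<epsilon> \<in> {-1, 1}" and "t > 0" and "\<nu> > 0"
    and "g \<in> borel_measurable lborel" and "\<And>\<xi>. norm (g \<xi>) \<le> B"
  shows "integrable lborel (\<lambda>\<xi>. (of_real \<xi>) ^ m * (K_symbol \<epsilon> \<nu> t y \<xi> * g \<xi>))"
proof (rule integrable_moments_of_gaussian_bound)
  show "\<nu> * t > 0"
    using assms by simp
  fix \<xi>
  have "norm (K_symbol \<epsilon> \<nu> t y \<xi> * g \<xi>) \<le> sqrt (pi / t) * sqrt \<bar>\<xi>\<bar> * exp (- \<nu> * t * \<xi>\<^sup>2) / (4 * pi\<^sup>2) * B"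
    unfolding norm_mult norm_K_symbol[OF assms(1,2)] by (intro mult_left_mono assms(5)) (use assms(2) in simp)
  then show "norm (K_symbol \<epsilon> \<nu> t y \<xi> * g \<xi>) \<le>
      B * sqrt (pi / t) / (4 * pi\<^sup>2) * (sqrt \<bar>\<xi>\<bar> * exp (- (\<nu> * t) * \<xi>\<^sup>2))"
    by (simp add: field_simps)
qed (use assms(4) in measurable)

lemma S_kernel_inner_integral:
  assumes "\<epsilon> \<noteq> 0" and "t \<noteq> 0" and "\<xi> \<noteq> 0"
  shows "integral UNIV (\<lambda>\<eta>. exp (\<i> * of_real (x * \<xi> + y * \<eta>)) *
      exp (of_real (- \<nu> * t * \<xi>\<^sup>2) + \<i> * of_real (t * (\<xi> ^ 3 - \<epsilon> * \<eta>\<^sup>2 / \<xi>)))) =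
    4 * of_real (pi\<^sup>2) * (exp (\<i> * of_real (x * \<xi>)) * (K_symbol \<epsilon> \<nu> t y \<xi> * exp (\<i> * of_real (t * \<xi> ^ 3))))"
proof -
  define A where "A = exp (\<i> * of_real (x * \<xi>)) * exp (of_real (- \<nu> * t * \<xi>\<^sup>2)) * exp (\<i> * of_real (t * \<xi> ^ 3))"
  have split_phase: "exp (\<i> * of_real (x * \<xi> + y * \<eta>)) *
      exp (of_real (- \<nu> * t * \<xi>\<^sup>2) + \<i> * of_real (t * (\<xi> ^ 3 - \<epsilon> * \<eta>\<^sup>2 / \<xi>))) =
      A * exp (\<i> * of_real (y * \<eta> - (t * \<epsilon> / \<xi>) * \<eta>\<^sup>2))" for \<eta>
  proof -
    have "t * (\<xi> ^ 3 - \<epsilon> * \<eta>\<^sup>2 / \<xi>) = t * \<xi> ^ 3 - (t * \<epsilon> / \<xi>) * \<eta>\<^sup>2"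
      using assms(3) by (simp add: field_simps)
    then show ?thesis
      unfolding A_def by (simp add: algebra_simps flip: exp_add)
  qed
  have "t * \<epsilon> / \<xi> \<noteq> 0"
    using assms by simp
  from has_integral_mult_right[OF has_integral_chirp[OF this], of A y]
  have "integral UNIV (\<lambda>\<eta>. exp (\<i> * of_real (x * \<xi> + y * \<eta>)) *
      exp (of_real (- \<nu> * t * \<xi>\<^sup>2) + \<i> * of_real (t * (\<xi> ^ 3 - \<epsilon> * \<eta>\<^sup>2 / \<xi>)))) = A * chirp_integral (t * \<epsilon> / \<xi>) y"
    unfolding split_phase by (rule integral_unique)
  then show ?thesis
    by (simp add: A_def K_symbol_def mult_ac)
qed

lemma S_kernel_eq_fourier_integral:
  assumes "\<epsilon> \<in> {-1, 1}" and "t > 0" and "\<nu> > 0"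
  shows "S_kernel \<epsilon> \<nu> x y t =
    (\<integral>\<xi>. exp (\<i> * of_real (x * \<xi>)) * (K_symbol \<epsilon> \<nu> t y \<xi> * exp (\<i> * of_real (t * \<xi> ^ 3))) \<partial>lborel)"
proof -
  define f where "f \<xi> = exp (\<i> * of_real (x * \<xi>)) * (K_symbol \<epsilon> \<nu> t y \<xi> * exp (\<i> * of_real (t * \<xi> ^ 3)))"
    for \<xi>
  have "integrable lborel (\<lambda>\<xi>. (of_real \<xi>) ^ 0 * (K_symbol \<epsilon> \<nu> t y \<xi> * exp (\<i> * of_real (t * \<xi> ^ 3))))"
    by (rule integrable_moments_K_symbol_mult[OF assms, where B = 1]) (auto simp: norm_exp_eq_Re)
  then have "integrable lborel f"
    unfolding f_def[abs_def] using integrable_iexp_mult by simp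
  have "\<epsilon> \<noteq> 0" and "t \<noteq> 0"
    using assms by auto
  then have "integral UNIV (\<lambda>\<xi>. integral UNIV (\<lambda>\<eta>. exp (\<i> * of_real (x * \<xi> + y * \<eta>)) *
      exp (of_real (- \<nu> * t * \<xi>\<^sup>2) + \<i> * of_real (t * (\<xi> ^ 3 - \<epsilon> * \<eta>\<^sup>2 / \<xi>))))) =
      integral UNIV (\<lambda>\<xi>. 4 * of_real (pi\<^sup>2) * f \<xi>)"
    unfolding f_def using S_kernel_inner_integral by (intro integral_spike[of "{0}"]) auto
  also have "\<dots> = 4 * of_real (pi\<^sup>2) * (\<integral>\<xi>. f \<xi> \<partial>lborel)"
    using integral_lborel[OF \<open>integrable lborel f\<close>] by simp
  finally show ?thesis
    unfolding S_kernel_def f_def by simp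
qed

definition K_star_integrand :: "real \<Rightarrow> real \<Rightarrow> real \<Rightarrow> real \<Rightarrow> real \<Rightarrow> real" where
  "K_star_integrand \<epsilon> \<nu> x y r =
     r powr (-1/4) * exp (- r) * cos (x * sqrt (r / \<nu>) + y\<^sup>2 / (4 * \<epsilon>) * sqrt (r / \<nu>) - pi / 4 * \<epsilon>)"

lemma K_star_integrand_square_substitution:
  assumes "t > 0" and "\<nu> > 0" and "\<xi> > 0"
  shows "2 * (\<nu> * t) * \<xi> * K_star_integrand \<epsilon> \<nu> (x * t powr (-1/2)) (y * t powr (-3/4)) (\<nu> * t * \<xi>\<^sup>2) =
    2 * (\<nu> * t) powr (3/4) * (sqrt \<xi> * exp (- \<nu> * t * \<xi>\<^sup>2) * cos (x * \<xi> + y\<^sup>2 * \<xi> / (4 * t * \<epsilon>) - pi * \<epsilon> / 4))"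
proof -
  define a where "a = \<nu> * t"
  have "a > 0"
    using assms by (simp add: a_def)
  have "t powr (-1/2) * sqrt t = 1"
    using assms(1) by (simp add: powr_half_sqrt[symmetric] flip: powr_add)
  have "(t powr (-3/4))\<^sup>2 * sqrt t = t powr (-3/4) * t powr (-3/4) * t powr (1/2)"
    using assms(1) by (simp add: power2_eq_square powr_half_sqrt)
  also have "\<dots> = t powr (-1)"
    by (simp flip: powr_add)
  finally have "(t powr (-3/4))\<^sup>2 * sqrt t = 1 / t"
    using assms(1) by (simp add: powr_minus_divide)
  have "sqrt (a * \<xi>\<^sup>2 / \<nu>) = sqrt t * \<xi>"
    using assms by (simp add: a_def real_sqrt_mult)
  then have "x * t powr (-1/2) * sqrt (a * \<xi>\<^sup>2 / \<nu>) + (y * t powr (-3/4))\<^sup>2 / (4 * \<epsilon>) * sqrt (a * \<xi>\<^sup>2 / \<nu>) =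
      x * \<xi> * (t powr (-1/2) * sqrt t) + y\<^sup>2 * \<xi> / (4 * \<epsilon>) * ((t powr (-3/4))\<^sup>2 * sqrt t)"
    by (simp add: power_mult_distrib)
  also have "\<dots> = x * \<xi> + y\<^sup>2 * \<xi> / (4 * t * \<epsilon>)"
    unfolding \<open>t powr (-1/2) * sqrt t = 1\<close> \<open>(t powr (-3/4))\<^sup>2 * sqrt t = 1 / t\<close> by simp
  finally have phase: "x * t powr (-1/2) * sqrt (a * \<xi>\<^sup>2 / \<nu>) + (y * t powr (-3/4))\<^sup>2 / (4 * \<epsilon>) * sqrt (a * \<xi>\<^sup>2 / \<nu>) =
      x * \<xi> + y\<^sup>2 * \<xi> / (4 * t * \<epsilon>)" .
  have "(a * \<xi>\<^sup>2) powr (-1/4) = a powr (-1/4) * (\<xi> powr 2) powr (-1/4)"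
    using \<open>a > 0\<close> assms(3) by (simp add: powr_mult powr_realpow)
  also have "\<dots> = a powr (-1/4) * \<xi> powr (-1/2)"
    by (simp add: powr_powr)
  finally have "2 * a * \<xi> * (a * \<xi>\<^sup>2) powr (-1/4) = 2 * (a * a powr (-1/4)) * (\<xi> * \<xi> powr (-1/2))"
    by (simp add: mult_ac)
  also have "\<dots> = 2 * a powr (3/4) * sqrt \<xi>"
    using \<open>a > 0\<close> assms(3) powr_add[of a 1 "-1/4"] powr_add[of \<xi> 1 "-1/2"] by (simp add: powr_half_sqrt)
  finally have amplitude: "2 * a * \<xi> * (a * \<xi>\<^sup>2) powr (-1/4) = 2 * a powr (3/4) * sqrt \<xi>" .
  have "2 * a * \<xi> * K_star_integrand \<epsilon> \<nu> (x * t powr (-1/2)) (y * t powr (-3/4)) (a * \<xi>\<^sup>2) =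
      (2 * a * \<xi> * (a * \<xi>\<^sup>2) powr (-1/4)) * exp (- (a * \<xi>\<^sup>2)) * cos (x * \<xi> + y\<^sup>2 * \<xi> / (4 * t * \<epsilon>) - pi / 4 * \<epsilon>)"
    unfolding K_star_integrand_def phase by (simp only: mult.assoc)
  also have "\<dots> = 2 * a powr (3/4) * (sqrt \<xi> * exp (- \<nu> * t * \<xi>\<^sup>2) * cos (x * \<xi> + y\<^sup>2 * \<xi> / (4 * t * \<epsilon>) - pi * \<epsilon> / 4))"
    unfolding amplitude by (simp add: a_def mult_ac)
  finally show ?thesis
    unfolding a_def .
qed

lemma K_kernel_eq_half_line_integral:
  assumes "\<epsilon> \<in> {-1, 1}" and "t > 0" and "\<nu> > 0"
  shows "K_kernel \<epsilon> \<nu> x y t = sqrt (pi / t) / (2 * pi\<^sup>2) *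
    integral {0<..} (\<lambda>\<xi>. sqrt \<xi> * exp (- \<nu> * t * \<xi>\<^sup>2) * cos (x * \<xi> + y\<^sup>2 * \<xi> / (4 * t * \<epsilon>) - pi * \<epsilon> / 4))"
proof -
  define a where "a = \<nu> * t"
  define F where "F = K_star_integrand \<epsilon> \<nu> (x * t powr (-1/2)) (y * t powr (-3/4))"
  define G where "G \<xi> = sqrt \<xi> * exp (- \<nu> * t * \<xi>\<^sup>2) * cos (x * \<xi> + y\<^sup>2 * \<xi> / (4 * t * \<epsilon>) - pi * \<epsilon> / 4)" for \<xi>
  have "a > 0"
    using assms by (simp add: a_def)
  have substituted: "2 * a * \<xi> * F (a * \<xi>\<^sup>2) = 2 * a powr (3/4) * G \<xi>" if "\<xi> > 0" for \<xi>
    unfolding a_def F_def G_def using K_star_integrand_square_substitution[OF assms(2,3) that] by simp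
  have "integrable lborel (\<lambda>\<xi>. (of_real \<xi>) ^ 0 * G \<xi>)"
  proof (rule integrable_moments_of_gaussian_bound)
    show "norm (G \<xi>) \<le> 1 * (sqrt \<bar>\<xi>\<bar> * exp (- a * \<xi>\<^sup>2))" for \<xi>
      by (simp add: G_def a_def abs_mult real_sqrt_abs' mult_left_le)
  qed (use \<open>a > 0\<close> in \<open>auto simp: G_def[abs_def]\<close>)
  then have "(\<lambda>\<xi>. 2 * a powr (3/4) * G \<xi>) absolutely_integrable_on {0<..}"
    by (intro lborel_integrable_imp_absolutely_integrable_on integrable_mult_right) auto
  then have "(\<lambda>\<xi>. 2 * a * \<xi> * F (a * \<xi>\<^sup>2)) absolutely_integrable_on {0<..}"
    by (subst set_integrable_cong[OF refl refl substituted]) auto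
  then have "integral {0<..} F = integral {0<..} (\<lambda>\<xi>. 2 * a * \<xi> * F (a * \<xi>\<^sup>2))"
    by (rule integral_Ioi_substitute_square[OF \<open>a > 0\<close>])
  also have "\<dots> = 2 * a powr (3/4) * integral {0<..} G"
    using substituted by (subst integral_cong[of _ _ "\<lambda>\<xi>. 2 * a powr (3/4) * G \<xi>"]) auto
  finally have "K_kernel \<epsilon> \<nu> x y t = t powr (-5/4) * (1 / (4 * pi powr (3/2) * \<nu> powr (3/4))) * (2 * a powr (3/4)) *
      integral {0<..} G"
    unfolding K_kernel_def K_star_def F_def K_star_integrand_def by (simp only: mult.assoc)
  also have "t powr (-5/4) * (1 / (4 * pi powr (3/2) * \<nu> powr (3/4))) * (2 * a powr (3/4)) =
      sqrt (pi / t) / (2 * pi\<^sup>2)"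
  proof -
    have "t powr (-5/4) * a powr (3/4) = \<nu> powr (3/4) * t powr (-1/2)"
      using assms by (simp add: a_def powr_mult mult_ac flip: powr_add)
    moreover have "sqrt (pi / t) = pi powr (1/2) * t powr (-1/2)"
      using assms(2) by (simp add: real_sqrt_divide powr_half_sqrt powr_minus_divide)
    moreover have "pi\<^sup>2 = pi powr (3/2) * pi powr (1/2)"
      by (simp flip: powr_add)
    ultimately show ?thesis
      using assms(3) by (simp add: field_simps)
  qed
  finally show ?thesis
    unfolding G_def .
qed

lemma K_kernel_eq_fourier_integral:
  assumes "\<epsilon> \<in> {-1, 1}" and "t > 0" and "\<nu> > 0"
  shows "of_real (K_kernel \<epsilon> \<nu> x y t) = (\<integral>\<xi>. exp (\<i> * of_real (x * \<xi>)) * K_symbol \<epsilon> \<nu> t y \<xi> \<partial>lborel)"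
proof -
  define w where "w \<xi> = exp (\<i> * of_real (x * \<xi>)) * K_symbol \<epsilon> \<nu> t y \<xi>" for \<xi>
  have "integrable lborel (\<lambda>\<xi>. (of_real \<xi>) ^ 0 * (K_symbol \<epsilon> \<nu> t y \<xi> * 1))"
    by (rule integrable_moments_K_symbol_mult[OF assms, where B = 1]) auto
  then have "integrable lborel w"
    unfolding w_def[abs_def] using integrable_iexp_mult by simp
  moreover have "w (- \<xi>) = cnj (w \<xi>)" for \<xi>
    unfolding w_def iexp_mult_K_symbol[OF assms(1,2)] by (simp add: cis_cnj sgn_minus algebra_simps)
  ultimately have "(\<integral>\<xi>. w \<xi> \<partial>lborel) = of_real (2 * integral {0<..} (\<lambda>\<xi>. Re (w \<xi>)))"
    by (rule lborel_integral_conj_symmetric)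
  also have "integral {0<..} (\<lambda>\<xi>. Re (w \<xi>)) = integral {0<..} (\<lambda>\<xi>. sqrt (pi / t) / (4 * pi\<^sup>2) *
      (sqrt \<xi> * exp (- \<nu> * t * \<xi>\<^sup>2) * cos (x * \<xi> + y\<^sup>2 * \<xi> / (4 * t * \<epsilon>) - pi * \<epsilon> / 4)))"
    by (rule integral_cong) (unfold w_def iexp_mult_K_symbol[OF assms(1,2)], simp)
  finally show ?thesis
    unfolding w_def K_kernel_eq_half_line_integral[OF assms] by simp
qed

section \<open>Decay of the difference\<close>

lemma integrable_moments_S_minus_K_symbol:
  assumes "\<epsilon> \<in> {-1, 1}" and "t > 0" and "\<nu> > 0"
  shows "integrable lborel (\<lambda>\<xi>. (of_real \<xi>) ^ m * (K_symbol \<epsilon> \<nu> t y \<xi> * (exp (\<i> * of_real (t * \<xi> ^ 3)) - 1)))"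
proof (rule integrable_moments_K_symbol_mult[OF assms, where B = 2])
  show "norm (exp (\<i> * of_real (t * \<xi> ^ 3)) - 1) \<le> 2" for \<xi>
    using norm_triangle_ineq4[of "exp (\<i> * of_real (t * \<xi> ^ 3))" 1] by (simp add: norm_exp_eq_Re)
qed measurable

lemma S_minus_K_eq_fourier_integral:
  assumes "\<epsilon> \<in> {-1, 1}" and "t > 0" and "\<nu> > 0"
  shows "(\<lambda>x. S_kernel \<epsilon> \<nu> x y t - of_real (K_kernel \<epsilon> \<nu> x y t)) =
    (\<lambda>x. \<integral>\<xi>. exp (\<i> * of_real (x * \<xi>)) * (K_symbol \<epsilon> \<nu> t y \<xi> * (exp (\<i> * of_real (t * \<xi> ^ 3)) - 1)) \<partial>lborel)"
proof
  fix x
  have "integrable lborel (\<lambda>\<xi>. exp (\<i> * of_real (x * \<xi>)) * (K_symbol \<epsilon> \<nu> t y \<xi> * g \<xi>))"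
    if "g \<in> borel_measurable lborel" and "\<And>\<xi>. norm (g \<xi>) \<le> 1" for g
    using integrable_iexp_mult[OF integrable_moments_K_symbol_mult[OF assms that, of 0]] by simp
  from this[of "\<lambda>\<xi>. exp (\<i> * of_real (t * \<xi> ^ 3))"] this[of "\<lambda>_. 1"]
  show "S_kernel \<epsilon> \<nu> x y t - of_real (K_kernel \<epsilon> \<nu> x y t) =
      (\<integral>\<xi>. exp (\<i> * of_real (x * \<xi>)) * (K_symbol \<epsilon> \<nu> t y \<xi> * (exp (\<i> * of_real (t * \<xi> ^ 3)) - 1)) \<partial>lborel)"
    unfolding S_kernel_eq_fourier_integral[OF assms] K_kernel_eq_fourier_integral[OF assms]
    by (simp add: norm_exp_eq_Re algebra_simps flip: Bochner_Integration.integral_diff)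
qed

lemma norm_xderiv_S_minus_K_le_gaussian_moment:
  assumes "\<epsilon> \<in> {-1, 1}" and "t > 0" and "\<nu> > 0"
  shows "norm (xderiv l (\<lambda>x'. S_kernel \<epsilon> \<nu> x' y t - of_real (K_kernel \<epsilon> \<nu> x' y t)) x) \<le>
    sqrt (pi / t) * t / (4 * pi\<^sup>2) * (\<integral>\<xi>. \<bar>\<xi>\<bar> ^ (l + 3) * sqrt \<bar>\<xi>\<bar> * exp (- (\<nu> * t) * \<xi>\<^sup>2) \<partial>lborel)"
proof -
  define h where "h \<xi> = K_symbol \<epsilon> \<nu> t y \<xi> * (exp (\<i> * of_real (t * \<xi> ^ 3)) - 1)" for \<xi>
  have moments: "integrable lborel (\<lambda>\<xi>. (of_real \<xi>) ^ m * h \<xi>)" for m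
    unfolding h_def by (rule integrable_moments_S_minus_K_symbol[OF assms])
  have "xderiv l (\<lambda>x'. S_kernel \<epsilon> \<nu> x' y t - of_real (K_kernel \<epsilon> \<nu> x' y t)) x =
      (\<integral>\<xi>. exp (\<i> * of_real (x * \<xi>)) * ((\<i> * of_real \<xi>) ^ l * h \<xi>) \<partial>lborel)"
    unfolding S_minus_K_eq_fourier_integral[OF assms] h_def[symmetric] xderiv_fourier_integral[OF moments] ..
  also have "norm \<dots> \<le> (\<integral>\<xi>. sqrt (pi / t) * t / (4 * pi\<^sup>2) * (\<bar>\<xi>\<bar> ^ (l + 3) * sqrt \<bar>\<xi>\<bar> * exp (- (\<nu> * t) * \<xi>\<^sup>2)) \<partial>lborel)"
  proof (rule Bochner_Integration.integral_norm_bound_integral)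
    show "integrable lborel (\<lambda>\<xi>. exp (\<i> * of_real (x * \<xi>)) * ((\<i> * of_real \<xi>) ^ l * h \<xi>))"
      using integrable_iexp_mult[OF integrable_mult_right[OF moments[of l], of "\<i> ^ l"], of x]
      by (simp add: power_mult_distrib mult_ac)
    show "integrable lborel (\<lambda>\<xi>. sqrt (pi / t) * t / (4 * pi\<^sup>2) * (\<bar>\<xi>\<bar> ^ (l + 3) * sqrt \<bar>\<xi>\<bar> * exp (- (\<nu> * t) * \<xi>\<^sup>2)))"
      using assms by (intro integrable_mult_right integrable_abs_power_sqrt_gaussian) simp
    fix \<xi> :: real
    have "norm (exp (\<i> * of_real (x * \<xi>)) * ((\<i> * of_real \<xi>) ^ l * h \<xi>)) =
        \<bar>\<xi>\<bar> ^ l * (norm (K_symbol \<epsilon> \<nu> t y \<xi>) * norm (exp (\<i> * of_real (t * \<xi> ^ 3)) - 1))"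
      by (simp add: h_def norm_mult norm_power)
    also have "\<dots> \<le> \<bar>\<xi>\<bar> ^ l * (sqrt (pi / t) * sqrt \<bar>\<xi>\<bar> * exp (- \<nu> * t * \<xi>\<^sup>2) / (4 * pi\<^sup>2) * \<bar>t * \<xi> ^ 3\<bar>)"
      unfolding norm_K_symbol[OF assms(1,2)] using assms(2)
      by (intro mult_left_mono norm_iexp_sub_one_le) auto
    also have "\<dots> = sqrt (pi / t) * t / (4 * pi\<^sup>2) * (\<bar>\<xi>\<bar> ^ (l + 3) * sqrt \<bar>\<xi>\<bar> * exp (- (\<nu> * t) * \<xi>\<^sup>2))"
      using assms(2) by (simp add: abs_mult power_abs power_add mult_ac)
    finally show "norm (exp (\<i> * of_real (x * \<xi>)) * ((\<i> * of_real \<xi>) ^ l * h \<xi>)) \<le>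
        sqrt (pi / t) * t / (4 * pi\<^sup>2) * (\<bar>\<xi>\<bar> ^ (l + 3) * sqrt \<bar>\<xi>\<bar> * exp (- (\<nu> * t) * \<xi>\<^sup>2))" .
  qed
  finally show ?thesis
    by simp
qed

lemma norm_xderiv_S_minus_K_le:
  assumes "\<epsilon> \<in> {-1, 1}" and "t > 0" and "\<nu> > 0"
  shows "norm (xderiv l (\<lambda>x'. S_kernel \<epsilon> \<nu> x' y t - of_real (K_kernel \<epsilon> \<nu> x' y t)) x) \<le>
    sqrt pi / (4 * pi\<^sup>2) * \<nu> powr (- (2 * real l + 9) / 4) *
    (\<integral>u. \<bar>u\<bar> ^ (l + 3) * sqrt \<bar>u\<bar> * exp (- u\<^sup>2) \<partial>lborel) * t powr (- 7/4 - real l / 2)"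
proof -
  define p where "p = - (2 * real l + 9) / 4"
  define M where "M = (\<integral>u. \<bar>u\<bar> ^ (l + 3) * sqrt \<bar>u\<bar> * exp (- u\<^sup>2) \<partial>lborel)"
  have "- (2 * real (l + 3) + 3) / 4 = p"
    by (simp add: p_def)
  have "norm (xderiv l (\<lambda>x'. S_kernel \<epsilon> \<nu> x' y t - of_real (K_kernel \<epsilon> \<nu> x' y t)) x)
      \<le> sqrt (pi / t) * t / (4 * pi\<^sup>2) * ((\<nu> * t) powr p * M)"
    using norm_xderiv_S_minus_K_le_gaussian_moment[OF assms, of l y x]
      integral_abs_power_sqrt_gaussian[of "\<nu> * t" "l + 3", unfolded \<open>- (2 * real (l + 3) + 3) / 4 = p\<close>]
      assms(2,3)
    unfolding M_def by simp
  also have "\<dots> = (sqrt (pi / t) * t * (\<nu> * t) powr p) * M / (4 * pi\<^sup>2)"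
    by simp
  also have "sqrt (pi / t) * t * (\<nu> * t) powr p = sqrt pi * \<nu> powr p * t powr (- 7/4 - real l / 2)"
  proof -
    have "sqrt (pi / t) = sqrt pi * t powr (- 1/2)"
      using assms(2) by (simp add: real_sqrt_divide powr_half_sqrt[symmetric] powr_minus_divide)
    then have "sqrt (pi / t) * t * (\<nu> * t) powr p = sqrt pi * \<nu> powr p * (t powr (- 1/2) * t powr 1 * t powr p)"
      using assms(2,3) by (simp add: powr_mult mult_ac)
    also have "\<dots> = sqrt pi * \<nu> powr p * t powr (- 1/2 + 1 + p)"
      by (simp only: powr_add)
    also have "- 1/2 + 1 + p = - 7/4 - real l / 2"
      by (simp add: p_def field_simps)
    finally show ?thesis .
  qed
  finally show ?thesis
    by (simp add: p_def M_def mult_ac)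
qed

theorem proposition2p5:
  fixes \<epsilon> \<nu> :: real and l :: nat
  assumes "\<epsilon> \<in> {-1, 1}" and "\<nu> > 0"
  shows "\<exists>C>0. \<forall>t>0. \<forall>x y.
           norm (xderiv l (\<lambda>x'. S_kernel \<epsilon> \<nu> x' y t - of_real (K_kernel \<epsilon> \<nu> x' y t)) x)
             \<le> C * t powr (- 7/4 - real l / 2)"
proof -
  define C where "C = sqrt pi / (4 * pi\<^sup>2) * \<nu> powr (- (2 * real l + 9) / 4) *
    (\<integral>u. \<bar>u\<bar> ^ (l + 3) * sqrt \<bar>u\<bar> * exp (- u\<^sup>2) \<partial>lborel)"
  have "C \<ge> 0"
    unfolding C_def by (intro mult_nonneg_nonneg integral_nonneg_AE) auto
  show ?thesis
  proof (intro exI[of _ "C + 1"] conjI allI impI)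
    show "C + 1 > 0"
      using \<open>C \<ge> 0\<close> by simp
    fix t x y :: real
    assume "t > 0"
    from norm_xderiv_S_minus_K_le[OF assms(1) this assms(2), of l y x]
    show "norm (xderiv l (\<lambda>x'. S_kernel \<epsilon> \<nu> x' y t - of_real (K_kernel \<epsilon> \<nu> x' y t)) x)
        \<le> (C + 1) * t powr (- 7/4 - real l / 2)"
      unfolding C_def[symmetric] by (rule order_trans) (intro mult_right_mono; simp)
  qed
qed

end
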